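(* Let $\mathcal E$ satisfy Assumption (i)–(v). For $x\in\mathbb R^d$ and $r\in(0,R_0]$ define $\mathcal E_r(x)=\sup_{y\in B_r(\bar y(x))}|\mathcal E(x,y)-\mathcal E(x,\bar y(x))|$. Let $0<q\le \mathcal E_\infty/2$ and $r:=\max\{s\in(0,R_0]:\sup_{x\in\mathbb R^d}\mathcal E_s(x)\le q\}$. Let $(\overline X_t,\overline Y_t)$ solve (MF) and $\rho_t^Y$ be the law of $\overline Y_t$. Then for every $t>0$ and every $x\in\mathbb R^d$ with $\rho_t^Y(B_r(\bar y(x)))>0$, $$|\bar y(x)-Y_\beta(\rho^Y_t,x)|\le\frac{(2q)^\nu}{\eta}+\frac{\exp(-\beta q)}{\rho_t^Y(B_r(\bar y(x)))}\int|y-\bar y(x)|\,\rho^Y_t(dy).$$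
   Context: Let $\mathcal{E}:\mathbb R^d\times\mathbb R^d\to\mathbb R$ be continuous, $|\cdot|$ the Euclidean norm, and $B_r(z)=\{z':\max_k|z'_k-z_k|\le r\}$ the $\ell^\infty$ ball. Weights $\omega^{\mathcal E}_\alpha(x,y)=\exp(-\alpha\mathcal E(x,y))$. For a probability measure $\rho^Y$, $Y_\beta(\rho^Y,x)=\int y\,e^{\beta\mathcal E(x,y)}\rho^Y(dy)/\int e^{\beta\mathcal E(x,y)}\rho^Y(dy)$, and $X_{\alpha,\beta}(\rho^X)=\int x\,e^{-\alpha\mathcal E(x,Y_\beta(\rho^Y,x))}\rho^X(dx)/\int e^{-\alpha\mathcal E(x,Y_\beta(\rho^Y,x))}\rho^X(dx)$. Mean-field system (MF): with $\lambda,\sigma,\alpha,\beta>0$, $D(z)=\mathrm{diag}(z_1,\dots,z_d)$, independent Brownian motions $B^X,B^Y$: $d\overline X_t=-\lambda(\overline X_t-X_{\alpha,\beta}(\rho^X_t))dt+\sigma D(\overline X_t-X_{\alpha,\beta}(\rho^X_t))dB^X_t$, $d\overline Y_t=-\lambda(\overline Y_t-Y_\beta(\rho^Y_t,\overline X_t))dt+\sigma D(\overline Y_t-Y_\beta(\rho^Y_t,\overline X_t))dB^Y_t$, $\rho^X_t,\rho^Y_t$ the laws of $\overline X_t,\overline Y_t$; a solution with finite fourth moments on bounded time intervals is assumed to exist. Assumption: (i) $\underline C_{\mathcal E}\le\mathcal E\le\overline C_{\mathcal E}$. (ii) $|\mathcal E(x_1,y_1)-\mathcal E(x_2,y_2)|\le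 L_{\mathcal E}(1+|x_1|+|x_2|+|y_1|+|y_2|)(|x_1-x_2|+|y_1-y_2|)$. (iii) for each $x$ there is a unique $\bar y(x)=\arg\max_y\mathcal E(x,y)$; with $\overline{\mathcal E}(x)=\mathcal E(x,\bar y(x))$, $x^*=\arg\min\overline{\mathcal E}$ and $y^*=\bar y(x^* )$; $|\bar y(x_1)-\bar y(x_2)|\le\bar c_1|x_1-x_2|$ and $|\bar y(x)|\le\bar c_2$ for all $x$. (iv) there are $\mathcal E_\infty,\eta,\nu,R_0>0$ such that for all $x$: $\eta|y-\bar y(x)|\le|\mathcal E(x,y)-\mathcal E(x,\bar y(x))|^\nu$ for $y\in B_{R_0}(\bar y(x))$, and $\mathcal E_\infty<\mathcal E(x,\bar y(x))-\mathcal E(x,y)$ for $y\notin B_{R_0}(\bar y(x))$. (v) for each $q>0$ there is $r\in(0,R_0]$ with $\sup_x\sup_{y\in B_r(\bar y(x))}|\mathcal E(x,y)-\mathcal E(x,\bar y(x))|\le q$. *)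

theory Defs
  imports "HOL-Probability.Probability"
begin

definition linf_ball :: "real^'n \<Rightarrow> real \<Rightarrow> (real^'n) set" where
  "linf_ball z r = {z'. \<forall>k. \<bar>z' $ k - z $ k\<bar> \<le> r}"

definition Y_beta :: "real \<Rightarrow> (real^'n \<Rightarrow> real^'n \<Rightarrow> real) \<Rightarrow> (real^'n) measure \<Rightarrow> real^'n \<Rightarrow> real^'n" where
  "Y_beta \<beta> E \<rho> x =
     (1 / (\<integral>y. exp (\<beta> * E x y) \<partial>\<rho>)) *\<^sub>R (\<integral>y. exp (\<beta> * E x y) *\<^sub>R y \<partial>\<rho>)"

definition E_r :: "(real^'n \<Rightarrow> real^'n \<Rightarrow> real) \<Rightarrow> (real^'n \<Rightarrow> real^'n) \<Rightarrow> real \<Rightarrow> real^'n \<Rightarrow> real" where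
  "E_r E ybar r x = (SUP y \<in> linf_ball (ybar x) r. \<bar>E x y - E x (ybar x)\<bar>)"

end

theory Submission
  imports Defs
begin

text \<open>
  Write w(y) = exp(\<beta> f(y)) for f = E(x,\<cdot>), maximised at y0 = ybar(x). Then
  y0 - Y_beta is the w-weighted average of y0 - y. Points with f(y0) - f(y) \<le> 2q lie within
  (2q)^\<nu>/\<eta> of y0 by the local growth condition, and contribute at most that much.
  On the remaining points w \<le> exp(\<beta>(f(y0) - 2q)), while the normaliser is at least
  \<rho>(B) exp(\<beta>(f(y0) - q)) because f \<ge> f(y0) - q on B = B_r(y0); their ratio gives the
  factor exp(-\<beta>q)/\<rho>(B).
\<close>

lemma integrable_bounded_weight_scaleR:
  fixes f :: "'a \<Rightarrow> 'b::{banach,second_countable_topology}"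
  assumes "integrable M f" "w \<in> borel_measurable M" "\<And>y. 0 \<le> w y" "\<And>y. w y \<le> C"
  shows "integrable M (\<lambda>y. w y *\<^sub>R f y)"
proof (rule Bochner_Integration.integrable_bound)
  show "integrable M (\<lambda>y. C * norm (f y))" using assms(1) by simp
  show "(\<lambda>y. w y *\<^sub>R f y) \<in> borel_measurable M" using assms(1,2) by measurable
  have "0 \<le> C" using assms(3,4) order_trans by blast
  then show "AE y in M. norm (w y *\<^sub>R f y) \<le> norm (C * norm (f y))"
    using assms(3,4) by (auto intro!: mult_right_mono)
qed

lemma integrable_id_of_integrable_norm_power:
  fixes M :: "'a::{banach,second_countable_topology} measure" and k :: nat
  assumes "finite_measure M" "(\<lambda>y. y) \<in> borel_measurable M"
    and "integrable M (\<lambda>y. norm y ^ k)" "1 \<le> k"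
  shows "integrable M (\<lambda>y. y)"
proof (rule Bochner_Integration.integrable_bound)
  interpret finite_measure M by fact
  show "integrable M (\<lambda>y. 1 + norm y ^ k)" using assms(3) by simp
  have "norm y \<le> 1 + norm y ^ k" for y :: 'a
  proof (cases "norm y \<le> 1")
    case True
    then show ?thesis by (smt (verit) zero_le_power norm_ge_zero)
  next
    case False
    then have "norm y ^ 1 \<le> norm y ^ k" using assms(4) by (intro power_increasing) auto
    then show ?thesis by simp
  qed
  then show "AE y in M. norm y \<le> norm (1 + norm y ^ k)" by simp
qed (use assms(2) in simp)

lemma norm_sub_weighted_mean_le:
  fixes y\<^sub>0 :: "'a::{banach,second_countable_topology}"
  assumes "finite_measure M" "integrable M (\<lambda>y. y)"
    and "w \<in> borel_measurable M" "\<And>y. 0 \<le> w y" "\<And>y. w y \<le> C" "0 < integral\<^sup>L M w"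
  shows "norm (y\<^sub>0 - (1 / integral\<^sup>L M w) *\<^sub>R (\<integral>y. w y *\<^sub>R y \<partial>M))
           \<le> (\<integral>y. w y * norm (y - y\<^sub>0) \<partial>M) / integral\<^sup>L M w"
proof -
  interpret finite_measure M by fact
  define Z where "Z = integral\<^sup>L M w"
  have w_int: "integrable M w"
    using assms(3-5) by (intro integrable_const_bound[where B=C]) auto
  have wy_int: "integrable M (\<lambda>y. w y *\<^sub>R y)"
    using integrable_bounded_weight_scaleR[OF assms(2-5)] .
  have "(\<integral>y. w y *\<^sub>R (y\<^sub>0 - y) \<partial>M) = (\<integral>y. w y *\<^sub>R y\<^sub>0 \<partial>M) - (\<integral>y. w y *\<^sub>R y \<partial>M)"
    unfolding scaleR_diff_right using w_int wy_int by (intro Bochner_Integration.integral_diff) auto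
  also have "(\<integral>y. w y *\<^sub>R y\<^sub>0 \<partial>M) = Z *\<^sub>R y\<^sub>0"
    unfolding Z_def using w_int by (rule integral_scaleR_left)
  finally have "y\<^sub>0 - (1 / Z) *\<^sub>R (\<integral>y. w y *\<^sub>R y \<partial>M) = (1 / Z) *\<^sub>R (\<integral>y. w y *\<^sub>R (y\<^sub>0 - y) \<partial>M)"
    using assms(6) by (simp add: Z_def scaleR_diff_right)
  then have "norm (y\<^sub>0 - (1 / Z) *\<^sub>R (\<integral>y. w y *\<^sub>R y \<partial>M)) = norm (\<integral>y. w y *\<^sub>R (y\<^sub>0 - y) \<partial>M) / Z"
    using assms(6) by (simp add: Z_def)
  also have "\<dots> \<le> (\<integral>y. norm (w y *\<^sub>R (y\<^sub>0 - y)) \<partial>M) / Z"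
    using assms(6) by (intro divide_right_mono integral_norm_bound) (simp add: Z_def)
  also have "\<dots> = (\<integral>y. w y * norm (y - y\<^sub>0) \<partial>M) / Z"
    using assms(4) by (simp add: norm_minus_commute)
  finally show ?thesis unfolding Z_def .
qed

lemma measure_mult_exp_le_integral_exp:
  assumes "finite_measure M" "integrable M (\<lambda>y. exp (\<beta> * f y))" "0 \<le> \<beta>"
    and "B \<in> sets M" "\<And>y. y \<in> B \<Longrightarrow> c \<le> f y"
  shows "measure M B * exp (\<beta> * c) \<le> (\<integral>y. exp (\<beta> * f y) \<partial>M)"
proof -
  interpret finite_measure M by fact
  have "measure M B * exp (\<beta> * c) = (\<integral>y. exp (\<beta> * c) * indicator B y \<partial>M)"
    using assms(4) by (simp add: Int_absorb2 sets.sets_into_space)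
  also have "\<dots> \<le> (\<integral>y. exp (\<beta> * f y) \<partial>M)"
    using assms(2-5)
    by (intro integral_mono integrable_mult_right integrable_real_indicator)
       (auto simp: indicator_def emeasure_eq_measure intro!: mult_left_mono)
  finally show ?thesis .
qed

lemma exp_mult_le_split_at_level:
  fixes \<beta> \<delta> d a b h :: real
  assumes "0 \<le> \<beta>" "0 \<le> \<delta>" "0 \<le> d" "a - b \<le> h \<Longrightarrow> d \<le> \<delta>"
  shows "exp (\<beta> * b) * d \<le> \<delta> * exp (\<beta> * b) + exp (\<beta> * (a - h)) * d"
proof (cases "a - b \<le> h")
  case True
  then have "exp (\<beta> * b) * d \<le> \<delta> * exp (\<beta> * b)" using assms(4) by simp
  then show ?thesis using assms(3) by (smt (verit) exp_gt_zero mult_nonneg_nonneg)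
next
  case False
  then have "exp (\<beta> * b) \<le> exp (\<beta> * (a - h))" using assms(1) by (simp add: mult_left_mono)
  then have "exp (\<beta> * b) * d \<le> exp (\<beta> * (a - h)) * d" using assms(3) by (rule mult_right_mono)
  then show ?thesis using assms(2) by (smt (verit) exp_gt_zero mult_nonneg_nonneg)
qed

lemma laplace_weighted_mean_bound:
  fixes f :: "'a::{banach,second_countable_topology} \<Rightarrow> real"
  assumes "finite_measure M" "integrable M (\<lambda>y. y)" "f \<in> borel_measurable M" "0 \<le> \<beta>"
    and max: "\<And>y. f y \<le> f y\<^sub>0"
    and B: "B \<in> sets M" "0 < measure M B" "\<And>y. y \<in> B \<Longrightarrow> f y\<^sub>0 - q \<le> f y"
    and near: "\<And>y. f y\<^sub>0 - f y \<le> 2 * q \<Longrightarrow> norm (y - y\<^sub>0) \<le> \<delta>" "0 \<le> \<delta>"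
  shows "norm (y\<^sub>0 - (1 / (\<integral>y. exp (\<beta> * f y) \<partial>M)) *\<^sub>R (\<integral>y. exp (\<beta> * f y) *\<^sub>R y \<partial>M))
           \<le> \<delta> + exp (- \<beta> * q) / measure M B * (\<integral>y. norm (y - y\<^sub>0) \<partial>M)"
proof -
  interpret finite_measure M by fact
  define w where "w y = exp (\<beta> * f y)" for y
  define Z where "Z = integral\<^sup>L M w"
  define I where "I = (\<integral>y. norm (y - y\<^sub>0) \<partial>M)"
  have w_meas: "w \<in> borel_measurable M" unfolding w_def using assms(3) by measurable
  have w_bd: "w y \<le> exp (\<beta> * f y\<^sub>0)" for y
    unfolding w_def using max assms(4) by (simp add: mult_left_mono)
  have w_int: "integrable M w"
    using w_meas w_bd by (intro integrable_const_bound[where B="exp (\<beta> * f y\<^sub>0)"]) (auto simp: w_def)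
  have I_int: "integrable M (\<lambda>y. norm (y - y\<^sub>0))"
    using assms(2) by (intro integrable_norm Bochner_Integration.integrable_diff) auto
  have Z_low: "measure M B * exp (\<beta> * (f y\<^sub>0 - q)) \<le> Z"
    unfolding Z_def w_def using assms(1,4) B(1,3) w_int
    by (intro measure_mult_exp_le_integral_exp) (auto simp: w_def[abs_def])
  have Z_pos: "0 < Z" using Z_low B(2) by (smt (verit) exp_gt_zero mult_pos_pos)
  have "(\<integral>y. w y * norm (y - y\<^sub>0) \<partial>M) \<le> (\<integral>y. \<delta> * w y + exp (\<beta> * (f y\<^sub>0 - 2 * q)) * norm (y - y\<^sub>0) \<partial>M)"
    using integrable_bounded_weight_scaleR[OF I_int w_meas _ w_bd] w_int I_int near assms(4)
    by (intro integral_mono) (auto simp: w_def[abs_def] intro!: exp_mult_le_split_at_level)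
  also have "\<dots> = \<delta> * Z + exp (\<beta> * (f y\<^sub>0 - 2 * q)) * I"
    unfolding Z_def I_def using w_int I_int by simp
  finally have weighted_le: "(\<integral>y. w y * norm (y - y\<^sub>0) \<partial>M) / Z \<le> \<delta> + exp (\<beta> * (f y\<^sub>0 - 2 * q)) / Z * I"
    using Z_pos by (smt (verit) divide_right_mono add_divide_distrib nonzero_mult_div_cancel_right times_divide_eq_left)
  have "exp (\<beta> * (f y\<^sub>0 - 2 * q)) / Z \<le> exp (\<beta> * (f y\<^sub>0 - 2 * q)) / (measure M B * exp (\<beta> * (f y\<^sub>0 - q)))"
    using Z_low B(2) Z_pos by (intro divide_left_mono) auto
  also have "\<dots> = exp (- \<beta> * q) / measure M B"
  proof -
    have "exp (\<beta> * (f y\<^sub>0 - 2 * q)) = exp (- \<beta> * q) * exp (\<beta> * (f y\<^sub>0 - q))"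
      by (simp add: mult_exp_exp algebra_simps)
    then show ?thesis by simp
  qed
  finally have "exp (\<beta> * (f y\<^sub>0 - 2 * q)) / Z * I \<le> exp (- \<beta> * q) / measure M B * I"
    unfolding I_def by (intro mult_right_mono integral_nonneg_AE) auto
  moreover have "norm (y\<^sub>0 - (1 / Z) *\<^sub>R (\<integral>y. w y *\<^sub>R y \<partial>M)) \<le> (\<integral>y. w y * norm (y - y\<^sub>0) \<partial>M) / Z"
    unfolding Z_def using assms(1,2) w_meas w_bd Z_pos
    by (intro norm_sub_weighted_mean_le) (auto simp: w_def Z_def)
  ultimately show ?thesis using weighted_le unfolding w_def Z_def I_def by linarith
qed

lemma closed_linf_ball: "closed (linf_ball (z :: real^'n) r)"
proof -
  have "linf_ball z r = (\<Inter>k. {z'. \<bar>z' $ k - z $ k\<bar> \<le> r})" unfolding linf_ball_def by auto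
  moreover have "closed {z'::real^'n. \<bar>z' $ k - z $ k\<bar> \<le> r}" for k
    by (intro closed_Collect_le continuous_intros)
  ultimately show ?thesis by auto
qed

lemma abs_sub_le_SUP_E_r:
  assumes "\<And>x y. C_low \<le> E x y \<and> E x y \<le> C_up" "0 \<le> r" "y \<in> linf_ball (ybar x) r"
  shows "\<bar>E x y - E x (ybar x)\<bar> \<le> (SUP x'. E_r E ybar r x')"
proof -
  have bd: "\<bar>E x' y' - E x' (ybar x')\<bar> \<le> C_up - C_low" for x' y'
    using assms(1) by (smt (verit))
  have centre: "ybar x' \<in> linf_ball (ybar x') r" for x'
    using assms(2) by (simp add: linf_ball_def)
  have "\<bar>E x y - E x (ybar x)\<bar> \<le> E_r E ybar r x"
    unfolding E_r_def by (rule cSUP_upper) (use assms(3) bd in \<open>auto intro!: bdd_aboveI2\<close>)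
  also have "\<dots> \<le> (SUP x'. E_r E ybar r x')"
    by (rule cSUP_upper, simp, rule bdd_aboveI2, unfold E_r_def, rule cSUP_least)
       (use centre bd in auto)
  finally show ?thesis .
qed

lemma norm_sub_le_of_growth_gap:
  assumes "0 < \<eta>" "0 \<le> \<nu>" "2 * q \<le> E_inf"
    and "y \<in> linf_ball y\<^sub>0 R \<Longrightarrow> \<eta> * norm (y - y\<^sub>0) \<le> \<bar>f y - f y\<^sub>0\<bar> powr \<nu>"
    and "y \<notin> linf_ball y\<^sub>0 R \<Longrightarrow> E_inf < f y\<^sub>0 - f y"
    and "f y \<le> f y\<^sub>0" "f y\<^sub>0 - f y \<le> 2 * q"
  shows "norm (y - y\<^sub>0) \<le> (2 * q) powr \<nu> / \<eta>"
proof -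
  have "y \<in> linf_ball y\<^sub>0 R" using assms(3,5,7) by force
  then have "\<eta> * norm (y - y\<^sub>0) \<le> \<bar>f y - f y\<^sub>0\<bar> powr \<nu>" by (rule assms(4))
  also have "\<dots> \<le> (2 * q) powr \<nu>" using assms(2,6,7) by (intro powr_mono2) auto
  finally show ?thesis using assms(1) by (simp add: field_simps)
qed

theorem proposition3p2:
  fixes E :: "real^'n \<Rightarrow> real^'n \<Rightarrow> real"
    and ybar :: "real^'n \<Rightarrow> real^'n"
    and \<rho>Y :: "real \<Rightarrow> (real^'n) measure"
    and C_low C_up L_E c1 c2 E_inf \<eta> \<nu> R0 q r \<beta> t :: real
    and x :: "real^'n"
  assumes cont: "continuous_on UNIV (\<lambda>(x, y). E x y)"
    and A1: "\<And>x y. C_low \<le> E x y \<and> E x y \<le> C_up"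
    and A2: "\<And>x1 y1 x2 y2. \<bar>E x1 y1 - E x2 y2\<bar>
               \<le> L_E * (1 + norm x1 + norm x2 + norm y1 + norm y2) * (norm (x1 - x2) + norm (y1 - y2))"
    and A3_argmax: "\<And>x y. y \<noteq> ybar x \<Longrightarrow> E x y < E x (ybar x)"
    and A3_argmin: "\<exists>!xs. \<forall>x'. E xs (ybar xs) \<le> E x' (ybar x')"
    and A3_lip: "\<And>x1 x2. norm (ybar x1 - ybar x2) \<le> c1 * norm (x1 - x2)"
    and A3_bd: "\<And>x. norm (ybar x) \<le> c2"
    and pos: "E_inf > 0" "\<eta> > 0" "\<nu> > 0" "R0 > 0"
    and A4_loc: "\<And>x y. y \<in> linf_ball (ybar x) R0 \<Longrightarrow>
               \<eta> * norm (y - ybar x) \<le> \<bar>E x y - E x (ybar x)\<bar> powr \<nu>"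
    and A4_far: "\<And>x y. y \<notin> linf_ball (ybar x) R0 \<Longrightarrow> E_inf < E x (ybar x) - E x y"
    and A5: "\<And>q'. q' > 0 \<Longrightarrow> \<exists>r'. 0 < r' \<and> r' \<le> R0 \<and>
               (\<forall>x. \<forall>y \<in> linf_ball (ybar x) r'. \<bar>E x y - E x (ybar x)\<bar> \<le> q')"
    and q: "0 < q" "q \<le> E_inf / 2"
    and r_mem: "0 < r" "r \<le> R0" "(SUP x'. E_r E ybar r x') \<le> q"
    and r_max: "\<And>s. 0 < s \<Longrightarrow> s \<le> R0 \<Longrightarrow> (SUP x'. E_r E ybar s x') \<le> q \<Longrightarrow> s \<le> r"
    and \<beta>: "\<beta> > 0"
    and law_prob: "\<And>s. prob_space (\<rho>Y s)"
    and law_sets: "\<And>s. sets (\<rho>Y s) = sets borel"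
    and law_mom4: "\<And>s. integrable (\<rho>Y s) (\<lambda>y. norm y ^ 4)"
    and t: "t > 0"
    and ball_pos: "measure (\<rho>Y t) (linf_ball (ybar x) r) > 0"
  shows "norm (ybar x - Y_beta \<beta> E (\<rho>Y t) x)
           \<le> (2 * q) powr \<nu> / \<eta>
             + exp (- \<beta> * q) / measure (\<rho>Y t) (linf_ball (ybar x) r)
               * (\<integral>y. norm (y - ybar x) \<partial>(\<rho>Y t))"
proof -
  interpret prob_space "\<rho>Y t" by (rule law_prob)
  have borel_M: "f \<in> borel_measurable (\<rho>Y t)" if "f \<in> borel_measurable borel" for f :: "real^'n \<Rightarrow> 'b::topological_space"
    using measurable_cong_sets[OF law_sets refl] that by blast
  have "continuous_on UNIV ((\<lambda>(x, y). E x y) \<circ> Pair x)"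
    by (intro continuous_on_compose continuous_intros continuous_on_subset[OF cont]) auto
  then have E_meas: "E x \<in> borel_measurable (\<rho>Y t)"
    by (intro borel_M borel_measurable_continuous_onI) (simp add: o_def)
  show ?thesis
    unfolding Y_beta_def
  proof (rule laplace_weighted_mean_bound)
    show "integrable (\<rho>Y t) (\<lambda>y. y)"
      using law_mom4 by (intro integrable_id_of_integrable_norm_power[where k=4] finite_measure_axioms borel_M) auto
    show "E x y \<le> E x (ybar x)" for y using A3_argmax[of y x] by (cases "y = ybar x") auto
    show "linf_ball (ybar x) r \<in> sets (\<rho>Y t)" by (simp add: law_sets borel_closed[OF closed_linf_ball])
    show "E x (ybar x) - q \<le> E x y" if "y \<in> linf_ball (ybar x) r" for y
    proof -
      have "\<bar>E x y - E x (ybar x)\<bar> \<le> (SUP x'. E_r E ybar r x')"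
        by (rule abs_sub_le_SUP_E_r) (use A1 r_mem that in auto)
      then show ?thesis using r_mem by linarith
    qed
    show "norm (y - ybar x) \<le> (2 * q) powr \<nu> / \<eta>" if "E x (ybar x) - E x y \<le> 2 * q" for y
      using A4_loc A4_far A3_argmax[of y x] that q pos
      by (intro norm_sub_le_of_growth_gap[where E_inf=E_inf and R=R0]) (auto simp: less_le)
  qed (use finite_measure_axioms E_meas \<beta> ball_pos pos in auto)
qed

end
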